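(* For all $n\ge1$, $u_{2n}(0)=\dfrac{n+1}{2^n}$.
   Context: The rational functions $u_{2n}(a)$ are defined by $(a^2+1)u_2=1$ and, for $n\ge2$, $(a^2+n^2)u_{2n}=3u_{2(n-1)}+3\sum_{j_1+j_2=n-1}u_{2j_1}u_{2j_2}+\sum_{j_1+j_2+j_3=n-1}u_{2j_1}u_{2j_2}u_{2j_3}-\sum_{1\le j_1,\,2j_1<n}(n-2j_1)^2u_{2j_1}u_{2(n-j_1)}$, all indices $j_i\ge1$. They are the Taylor coefficients of the solution of the degenerate third Painlevé equation vanishing at $\tau=0$. *)

theory Defs
  imports Complex_Main
begin

text \<open>u n a stands for the paper's u_{2n}(a), evaluated at a real point a
  (the denominators a^2 + n^2 are positive for n \<ge> 1). The value at n = 0 is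
  an unused convention.\<close>

function u :: "nat \<Rightarrow> real \<Rightarrow> real" where
  "u n a =
    (if n = 0 then 0
     else if n = 1 then 1 / (a^2 + 1)
     else (3 * u (n - 1) a
           + 3 * (\<Sum>(j1, j2) \<in> {(j1, j2). 1 \<le> j1 \<and> 1 \<le> j2 \<and> j1 + j2 = n - 1}.
                    u j1 a * u j2 a)
           + (\<Sum>(j1, j2, j3) \<in> {(j1, j2, j3). 1 \<le> j1 \<and> 1 \<le> j2 \<and> 1 \<le> j3 \<and> j1 + j2 + j3 = n - 1}.
                    u j1 a * u j2 a * u j3 a)
           - (\<Sum>j1 \<in> {j1. 1 \<le> j1 \<and> 2 * j1 < n}.
                    (real n - 2 * real j1)^2 * u j1 a * u (n - j1) a))
          / (a^2 + (real n)^2))"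
  by pat_completeness auto
termination
  by (relation "measure fst") auto

end

theory Submission
  imports Defs
begin

text \<open>Let w n = (n + 1) / 2^n. Since w i * w j = (i + 1) (j + 1) / 2^(i + j), substituting w
  into the recurrence turns each convolution over compositions of m into a polynomial sum divided
  by 2^m, and the recurrence for w becomes an identity between three such polynomial sums, each
  evaluated in closed form by induction on its range. The last sum of the recurrence runs over
  only half of the compositions of n into two parts; its summand is symmetric and vanishes on the
  diagonal, so it is half of the full sum.\<close>

declare u.simps [simp del]

definition compositions2 :: "nat \<Rightarrow> (nat \<times> nat) set" where
  "compositions2 M = {(i, j). 1 \<le> i \<and> 1 \<le> j \<and> i + j = M}"

definition compositions3 :: "nat \<Rightarrow> (nat \<times> nat \<times> nat) set" where
  "compositions3 M = {(i, j, k). 1 \<le> i \<and> 1 \<le> j \<and> 1 \<le> k \<and> i + j + k = M}"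

lemma compositions2_eq_image: "compositions2 M = (\<lambda>i. (i, M - i)) ` {1..<M}"
  by (auto simp: compositions2_def image_iff)

lemma finite_compositions2 [simp]: "finite (compositions2 M)"
  by (simp add: compositions2_eq_image)

lemma sum_compositions2: "(\<Sum>(i, j)\<in>compositions2 M. g i j) = (\<Sum>i\<in>{1..<M}. g i (M - i))"
proof -
  have "inj_on (\<lambda>i. (i, M - i)) {1..<M}"
    by (auto simp: inj_on_def)
  then show ?thesis
    by (simp add: compositions2_eq_image sum.reindex)
qed

lemma sum_compositions3:
  "(\<Sum>(i, j, k)\<in>compositions3 M. g i j k)
    = (\<Sum>i\<in>{1..<M}. \<Sum>(j, k)\<in>compositions2 (M - i). g i j k)"
proof -
  have "compositions3 M = Sigma {1..<M} (\<lambda>i. compositions2 (M - i))"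
    by (auto simp: compositions2_def compositions3_def)
  then show ?thesis
    by (simp add: sum.Sigma)
qed

lemma sum_compositions2_symmetric:
  fixes g :: "nat \<Rightarrow> nat \<Rightarrow> 'a::semiring_1"
  assumes sym: "\<And>i j. g i j = g j i" and diag: "\<And>i. g i i = 0"
  shows "(\<Sum>(i, j)\<in>compositions2 n. g i j) = 2 * (\<Sum>i | 1 \<le> i \<and> 2 * i < n. g i (n - i))"
proof -
  define h where "h i = g i (n - i)" for i
  let ?lower = "{i. 1 \<le> i \<and> 2 * i < n}" and ?upper = "{i. i < n \<and> n \<le> 2 * i}"
  have reflect: "?upper = (\<lambda>i. n - i) ` {i. 1 \<le> i \<and> 2 * i \<le> n}"
  proof (intro set_eqI iffI)
    fix i
    assume "i \<in> ?upper"
    then show "i \<in> (\<lambda>i. n - i) ` {i. 1 \<le> i \<and> 2 * i \<le> n}"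
      by (intro image_eqI[where x = "n - i"]) auto
  qed auto
  have "sum h ?upper = (\<Sum>i | 1 \<le> i \<and> 2 * i \<le> n. h (n - i))"
    unfolding reflect by (subst sum.reindex) (auto simp: inj_on_def)
  also have "\<dots> = (\<Sum>i | 1 \<le> i \<and> 2 * i \<le> n. h i)"
    by (intro sum.cong) (auto simp: h_def sym)
  also have "\<dots> = sum h ?lower"
  proof (intro sum.mono_neutral_right)
    show "finite {i. 1 \<le> i \<and> 2 * i \<le> n}"
      by (rule finite_subset[of _ "{..n}"]) auto
    have "h i = 0" if "2 * i = n" for i
      unfolding h_def that[symmetric] by (simp add: mult_2 diag)
    then show "\<forall>i\<in>{i. 1 \<le> i \<and> 2 * i \<le> n} - ?lower. h i = 0"
      by (auto simp: le_less)
  qed auto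
  finally have upper_eq_lower: "sum h ?upper = sum h ?lower" .
  have "{1..<n} = ?lower \<union> ?upper"
    by auto
  moreover have "finite ?lower" "finite ?upper"
    by (rule finite_subset[of _ "{..<n}"]; auto)+
  ultimately have "sum h {1..<n} = sum h ?lower + sum h ?upper"
    by (simp only:) (rule sum.union_disjoint; auto)
  then show ?thesis
    unfolding sum_compositions2 upper_eq_lower by (simp only: mult_2 flip: h_def)
qed

lemma sum_compositions2_of_nat:
  "(\<Sum>(i, j)\<in>compositions2 M. g (real i) (real j))
    = (\<Sum>i\<in>{1..<M}. g (real i) (real M - real i))"
  unfolding sum_compositions2 by (intro sum.cong) (auto simp: of_nat_diff)

lemma sum_compositions2_prod_succ:
  assumes "1 \<le> M"
  shows "(\<Sum>(i, j)\<in>compositions2 M. (real i + 1) * (real j + 1))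
    = (real M - 1) * (real M + 1) * (real M + 6) / 6"
proof -
  \<comment> \<open>M is generalised to a free x, so that only the range varies in the induction.\<close>
  have closed_form: "(\<Sum>i\<in>{1..<N}. (real i + 1) * (x - real i + 1))
      = (real N - 1) * (3 * x * (real N + 2) - (real N - 2) * (2 * real N + 3)) / 6"
    if "1 \<le> N" for N and x :: real
    using that
  proof (induction N rule: nat_induct_at_least)
    case (Suc N)
    then show ?case
      by (simp add: sum.atLeastLessThan_Suc field_simps)
  qed simp
  from closed_form[OF assms, of "real M"] show ?thesis
    using sum_compositions2_of_nat[where g = "\<lambda>x y. (x + 1) * (y + 1)"]
    by (simp add: field_simps)
qed

lemma sum_compositions3_prod_succ:
  assumes "1 \<le> M"
  shows "(\<Sum>(i, j, k)\<in>compositions3 M. (real i + 1) * (real j + 1) * (real k + 1))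
    = (real M - 2) * (real M - 1) * (real M + 1) * (real M + 5) * (real M + 12) / 120"
proof -
  have closed_form: "(\<Sum>i\<in>{1..<N}.
        (real i + 1) * ((x - real i - 1) * (x - real i + 1) * (x - real i + 6) / 6))
      = (real N - 1) * (10 * x^3 * (real N + 2) - 20 * x^2 * ((real N)^2 - 2 * real N - 6)
          + 5 * x * (3 * (real N)^3 - 15 * (real N)^2 - 20 * real N - 4)
          - 4 * (real N)^4 + 31 * (real N)^3 + 21 * (real N)^2 - 74 * real N - 120) / 120"
    if "1 \<le> N" for N and x :: real
    using that
  proof (induction N rule: nat_induct_at_least)
    case (Suc N)
    then show ?case
      unfolding sum.atLeastLessThan_Suc[OF Suc.hyps] Suc.IH
      by (simp add: field_simps power2_eq_square power3_eq_cube power4_eq_xxxx)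
  qed simp
  have "(\<Sum>(i, j, k)\<in>compositions3 M. (real i + 1) * (real j + 1) * (real k + 1))
      = (\<Sum>i\<in>{1..<M}.
          (real i + 1) * (\<Sum>(j, k)\<in>compositions2 (M - i). (real j + 1) * (real k + 1)))"
    unfolding sum_compositions3 sum_distrib_left by (simp add: case_prod_beta mult.assoc)
  also have "\<dots> = (\<Sum>i\<in>{1..<M}. (real i + 1)
      * ((real M - real i - 1) * (real M - real i + 1) * (real M - real i + 6) / 6))"
    by (intro sum.cong) (auto simp: sum_compositions2_prod_succ of_nat_diff)
  also have "\<dots> = (real M - 2) * (real M - 1) * (real M + 1) * (real M + 5) * (real M + 12) / 120"
    unfolding closed_form[OF assms]
    by (simp add: algebra_simps power2_eq_square power3_eq_cube power4_eq_xxxx)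
  finally show ?thesis .
qed

lemma sum_compositions2_sq_diff_prod_succ:
  "(\<Sum>(i, j)\<in>compositions2 n. (real j - real i)^2 * ((real i + 1) * (real j + 1)))
    = real n * (real n - 2) * (real n - 1) * (real n + 1) * (real n + 12) / 30"
proof (cases "n = 0")
  case True
  then show ?thesis
    by (simp add: sum_compositions2)
next
  case False
  have closed_form: "(\<Sum>i\<in>{1..<N}. (x - real i - real i)^2 * ((real i + 1) * (x - real i + 1)))
      = (real N - 1) * (15 * x^3 * (real N + 2) - 5 * x^2 * (2 * real N - 1) * (5 * real N + 6)
          + 20 * x * real N * (3 * real N - 4) * (real N + 1)
          - 12 * real N * (real N - 2) * (2 * real N - 1) * (real N + 1)) / 30"
    if "1 \<le> N" for N and x :: real
    using that
  proof (induction N rule: nat_induct_at_least)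
    case (Suc N)
    then show ?case
      unfolding sum.atLeastLessThan_Suc[OF Suc.hyps] Suc.IH
      by (simp add: field_simps power2_eq_square power3_eq_cube power4_eq_xxxx)
  qed simp
  from False closed_form[of n "real n"] show ?thesis
    using sum_compositions2_of_nat[where g = "\<lambda>x y. (y - x)^2 * ((x + 1) * (y + 1))"]
    by (simp add: algebra_simps power2_eq_square power3_eq_cube)
qed

definition recurrence_numerator :: "(nat \<Rightarrow> real) \<Rightarrow> nat \<Rightarrow> real" where
  "recurrence_numerator f n =
     3 * f (n - 1)
     + 3 * (\<Sum>(i, j)\<in>compositions2 (n - 1). f i * f j)
     + (\<Sum>(i, j, k)\<in>compositions3 (n - 1). f i * f j * f k)
     - (\<Sum>i | 1 \<le> i \<and> 2 * i < n. (real n - 2 * real i)^2 * f i * f (n - i))"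

lemma u_recurrence:
  "2 \<le> n \<Longrightarrow> u n a = recurrence_numerator (\<lambda>j. u j a) n / (a^2 + (real n)^2)"
  by (subst u.simps) (simp add: recurrence_numerator_def compositions2_def compositions3_def)

lemma recurrence_numerator_cong:
  assumes "2 \<le> n" and "\<And>j. 1 \<le> j \<Longrightarrow> j < n \<Longrightarrow> f j = g j"
  shows "recurrence_numerator f n = recurrence_numerator g n"
proof -
  have "f (n - 1) = g (n - 1)"
    using assms by simp
  moreover have "(\<Sum>(i, j)\<in>compositions2 (n - 1). f i * f j)
      = (\<Sum>(i, j)\<in>compositions2 (n - 1). g i * g j)"
    using assms(2) by (intro sum.cong) (auto simp: compositions2_def)
  moreover have "(\<Sum>(i, j, k)\<in>compositions3 (n - 1). f i * f j * f k)
      = (\<Sum>(i, j, k)\<in>compositions3 (n - 1). g i * g j * g k)"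
    using assms(2) by (intro sum.cong) (auto simp: compositions3_def)
  moreover have "(\<Sum>i | 1 \<le> i \<and> 2 * i < n. (real n - 2 * real i)^2 * f i * f (n - i))
      = (\<Sum>i | 1 \<le> i \<and> 2 * i < n. (real n - 2 * real i)^2 * g i * g (n - i))"
    using assms(2) by (intro sum.cong) auto
  ultimately show ?thesis
    by (simp add: recurrence_numerator_def)
qed

definition u0_closed_form :: "nat \<Rightarrow> real" where
  "u0_closed_form n = real (n + 1) / 2 ^ n"

lemma u0_closed_form_mult:
  "u0_closed_form i * u0_closed_form j = (real i + 1) * (real j + 1) / 2 ^ (i + j)"
  by (simp add: u0_closed_form_def power_add add.commute)

lemma recurrence_numerator_u0_closed_form:
  assumes "2 \<le> n"
  shows "recurrence_numerator u0_closed_form n = (real n)^2 * u0_closed_form n"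
proof -
  obtain m where n: "n = Suc m" and m: "1 \<le> m"
    using assms by (cases n) auto
  have pairs: "(\<Sum>(i, j)\<in>compositions2 m. u0_closed_form i * u0_closed_form j)
      = (real m - 1) * (real m + 1) * (real m + 6) / 6 / 2 ^ m"
  proof -
    have "(\<Sum>(i, j)\<in>compositions2 m. u0_closed_form i * u0_closed_form j)
        = (\<Sum>(i, j)\<in>compositions2 m. (real i + 1) * (real j + 1)) / 2 ^ m"
      unfolding sum_divide_distrib
      by (intro sum.cong) (auto simp: compositions2_def u0_closed_form_mult)
    then show ?thesis
      using m by (simp add: sum_compositions2_prod_succ)
  qed
  have triples: "(\<Sum>(i, j, k)\<in>compositions3 m.
        u0_closed_form i * u0_closed_form j * u0_closed_form k)
      = (real m - 2) * (real m - 1) * (real m + 1) * (real m + 5) * (real m + 12) / 120 / 2 ^ m"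
  proof -
    have "(\<Sum>(i, j, k)\<in>compositions3 m.
          u0_closed_form i * u0_closed_form j * u0_closed_form k)
        = (\<Sum>(i, j, k)\<in>compositions3 m. (real i + 1) * (real j + 1) * (real k + 1)) / 2 ^ m"
      unfolding sum_divide_distrib
      by (intro sum.cong) (auto simp: compositions3_def u0_closed_form_def power_add add.commute)
    then show ?thesis
      using m by (simp add: sum_compositions3_prod_succ)
  qed
  have "2 * (\<Sum>i | 1 \<le> i \<and> 2 * i < n.
        (real n - 2 * real i)^2 * u0_closed_form i * u0_closed_form (n - i))
      = 2 * (\<Sum>i | 1 \<le> i \<and> 2 * i < n.
        (real (n - i) - real i)^2 * (u0_closed_form i * u0_closed_form (n - i)))"
    by (intro arg_cong[where f = "(*) 2"] sum.cong) (auto simp: of_nat_diff algebra_simps)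
  also have "\<dots> = (\<Sum>(i, j)\<in>compositions2 n.
      (real j - real i)^2 * (u0_closed_form i * u0_closed_form j))"
    by (rule sum_compositions2_symmetric[symmetric]) (simp_all add: power2_commute mult.commute)
  also have "\<dots> = (\<Sum>(i, j)\<in>compositions2 n.
      (real j - real i)^2 * ((real i + 1) * (real j + 1))) / 2 ^ n"
    unfolding sum_divide_distrib by (intro sum.cong) (auto simp: compositions2_def u0_closed_form_mult)
  finally have half_sum: "(\<Sum>i | 1 \<le> i \<and> 2 * i < n.
        (real n - 2 * real i)^2 * u0_closed_form i * u0_closed_form (n - i))
      = real n * (real n - 2) * (real n - 1) * (real n + 1) * (real n + 12) / 60 / 2 ^ n"
    by (simp add: sum_compositions2_sq_diff_prod_succ)
  show ?thesis
    unfolding recurrence_numerator_def half_sum unfolding n diff_Suc_1 pairs triples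
    by (simp add: u0_closed_form_def field_simps) (simp add: algebra_simps power2_eq_square)
qed

theorem proposition10:
  fixes n :: nat
  assumes "n \<ge> 1"
  shows "u n 0 = real (n + 1) / 2 ^ n"
  using assms
proof (induction n rule: less_induct)
  case (less n)
  show ?case
  proof (cases "n = 1")
    case True
    then show ?thesis
      using u.simps[of 1 0] by simp
  next
    case False
    with less.prems have "2 \<le> n"
      by simp
    then have "recurrence_numerator (\<lambda>j. u j 0) n = recurrence_numerator u0_closed_form n"
      by (rule recurrence_numerator_cong) (simp add: less.IH u0_closed_form_def)
    with \<open>2 \<le> n\<close> show ?thesis
      by (simp add: u_recurrence recurrence_numerator_u0_closed_form u0_closed_form_def)
  qed
qed

end
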